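(* Let $M$ be a matroid on a finite set $E$ with $r(M)>0$. Then $M$ is a unique expansion matroid if and only if $M$ is a unique partition matroid, i.e. there exists a partition $P$ of the set $\cup P\subseteq E$ such that $\mathcal{I}(M)=\{X\subseteq \cup P: |X\cap D|\le 1\text{ for all } D\in P\}$.
   Context: For a matroid $M=(E,\mathcal{I})$: $\mathcal{I}(M)$ is its family of independent sets, $\mathcal{B}(M)$ its bases, $r(M)$ the size of a base. For $r(M)>0$, $s(M)=\{A\in\mathcal{I}(M): |A|=r(M)-1\}$. $M$ is a unique expansion matroid if for every $B\in\mathcal{B}(M)$ and every $A\in s(M)$, whenever $e_1,e_2\in B$ satisfy $A\cup\{e_1\}\in\mathcal{B}(M)$ and $A\cup\{e_2\}\in\mathcal{B}(M)$, then $e_1=e_2$. For a set family $S$, $\cup S=\bigcup_{X\in S}X$; a partition of a set $U$ is a family of nonempty pairwise disjoint subsets of $U$ with union $U$. *)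

theory Defs
  imports Main
begin

definition matroid :: "'a set \<Rightarrow> 'a set set \<Rightarrow> bool" where
  "matroid E Ind \<longleftrightarrow> finite E \<and> (\<forall>X\<in>Ind. X \<subseteq> E) \<and> {} \<in> Ind
     \<and> (\<forall>X Y. X \<in> Ind \<and> Y \<subseteq> X \<longrightarrow> Y \<in> Ind)
     \<and> (\<forall>X Y. X \<in> Ind \<and> Y \<in> Ind \<and> card X < card Y \<longrightarrow> (\<exists>e\<in>Y - X. insert e X \<in> Ind))"

definition bases :: "'a set set \<Rightarrow> 'a set set" where
  "bases Ind = {B \<in> Ind. \<forall>X\<in>Ind. B \<subseteq> X \<longrightarrow> X = B}"

text \<open>Rank of the matroid: the size of a base (all bases have equal size in a matroid).\<close>
definition mrank :: "'a set set \<Rightarrow> nat" where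
  "mrank Ind = card (SOME B. B \<in> bases Ind)"

definition sfam :: "'a set set \<Rightarrow> 'a set set" where
  "sfam Ind = {A \<in> Ind. card A = mrank Ind - 1}"

definition unique_expansion :: "'a set set \<Rightarrow> bool" where
  "unique_expansion Ind \<longleftrightarrow>
     (\<forall>B\<in>bases Ind. \<forall>A\<in>sfam Ind. \<forall>e1\<in>B. \<forall>e2\<in>B.
        insert e1 A \<in> bases Ind \<and> insert e2 A \<in> bases Ind \<longrightarrow> e1 = e2)"

definition is_partition :: "'a set set \<Rightarrow> 'a set \<Rightarrow> bool" where
  "is_partition P U \<longleftrightarrow> (\<forall>D\<in>P. D \<noteq> {}) \<and>
     (\<forall>D1\<in>P. \<forall>D2\<in>P. D1 \<noteq> D2 \<longrightarrow> D1 \<inter> D2 = {}) \<and> \<Union>P = U"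

definition unique_partition :: "'a set \<Rightarrow> 'a set set \<Rightarrow> bool" where
  "unique_partition E Ind \<longleftrightarrow>
     (\<exists>P. is_partition P (\<Union>P) \<and> \<Union>P \<subseteq> E \<and>
        Ind = {X. X \<subseteq> \<Union>P \<and> (\<forall>D\<in>P. card (X \<inter> D) \<le> 1)})"

end

theory Submission
  imports Defs
begin

text \<open>
  If every expansion is unique, no circuit C has three distinct elements a, b, c: extending
  C - {a} to a base B, the set A = (B - {b, c}) \<union> {a} of size r - 1 expands to the two bases
  (B - {b}) \<union> {a} and (B - {c}) \<union> {a} by the distinct elements c, b of B. So a set is
  dependent exactly when it contains a loop or two parallel elements, and since parallelism is
  an equivalence relation on the non-loops (by augmentation), its classes form the partition.
  Conversely, in a partition matroid two elements expanding the same A lie in one block, since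
  otherwise A together with both would be independent of size r + 1; and a base meets each
  block at most once.
\<close>

definition partition_indep :: "'a set set \<Rightarrow> 'a set set" where
  "partition_indep P = {X. X \<subseteq> \<Union>P \<and> (\<forall>D\<in>P. card (X \<inter> D) \<le> 1)}"

lemma partition_indep_iff:
  assumes "finite X"
  shows "X \<in> partition_indep P \<longleftrightarrow> X \<subseteq> \<Union>P \<and> (\<forall>D\<in>P. \<forall>x\<in>X \<inter> D. \<forall>y\<in>X \<inter> D. x = y)"
  using assms by (simp add: partition_indep_def card_le_Suc0_iff_eq)

lemma partition_indep_insert:
  assumes "is_partition P U" "X \<in> partition_indep P" "finite X"
    and "D \<in> P" "x \<in> D" "X \<inter> D = {}"
  shows "insert x X \<in> partition_indep P"
proof -
  have "D' \<inter> D = {}" if "D' \<in> P" "D' \<noteq> D" for D'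
    using assms(1) that \<open>D \<in> P\<close> unfolding is_partition_def by blast
  then show ?thesis
    using assms(2-) by (simp add: partition_indep_iff) blast
qed

lemma partition_indep_insert_block:
  assumes "insert x X \<in> partition_indep P" "finite X" "x \<notin> X"
  obtains D where "D \<in> P" "x \<in> D" "X \<inter> D = {}"
proof -
  have cover: "insert x X \<subseteq> \<Union>P"
    and uniq: "\<forall>D\<in>P. \<forall>y\<in>insert x X \<inter> D. \<forall>z\<in>insert x X \<inter> D. y = z"
    using assms(1,2) by (simp_all add: partition_indep_iff)
  obtain D where D: "D \<in> P" "x \<in> D" using cover by blast
  have "y = x" if "y \<in> X \<inter> D" for y
    using uniq[rule_format, OF D(1), of y x] that D(2) by simp
  then have "X \<inter> D = {}" using assms(3) by blast
  then show ?thesis using that D by blast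
qed

lemma equiv_is_partition_quotient:
  assumes "equiv A r"
  shows "is_partition (A // r) A"
  unfolding is_partition_def
  using in_quotient_imp_non_empty[OF assms] quotient_disj[OF assms] Union_quotient[OF assms] by blast

locale matroid_on =
  fixes E :: "'a set" and Ind :: "'a set set"
  assumes matroid: "matroid E Ind"
begin

lemma finite_ground: "finite E"
  using matroid unfolding matroid_def by blast

lemma indep_subset_ground: "X \<in> Ind \<Longrightarrow> X \<subseteq> E"
  using matroid unfolding matroid_def by blast

lemma finite_indep: "X \<in> Ind \<Longrightarrow> finite X"
  using finite_ground indep_subset_ground finite_subset by blast

lemma indep_subset: "X \<in> Ind \<Longrightarrow> Y \<subseteq> X \<Longrightarrow> Y \<in> Ind"
  using matroid unfolding matroid_def by blast

lemma empty_indep: "{} \<in> Ind"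
  using matroid unfolding matroid_def by blast

lemma indep_augment:
  "X \<in> Ind \<Longrightarrow> Y \<in> Ind \<Longrightarrow> card X < card Y \<Longrightarrow> \<exists>e\<in>Y - X. insert e X \<in> Ind"
  using matroid unfolding matroid_def by blast

lemma indep_extend:
  assumes "X \<in> Ind" "Y \<in> Ind" "card X \<le> card Y"
  obtains W where "W \<in> Ind" "X \<subseteq> W" "W \<subseteq> X \<union> Y" "card W = card Y"
proof -
  have "\<exists>W. W \<in> Ind \<and> X \<subseteq> W \<and> W \<subseteq> X \<union> Y \<and> card W = card Y"
    if "X \<in> Ind" "card X \<le> card Y" "card Y - card X = n" for n X
    using that
  proof (induction n arbitrary: X)
    case 0
    then have "card X = card Y" by simp
    then show ?case using "0.prems" by blast
  next
    case (Suc n)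
    then have "card X < card Y" by simp
    then obtain e where e: "e \<in> Y - X" "insert e X \<in> Ind"
      using indep_augment[OF Suc.prems(1) assms(2)] by blast
    then have "card (insert e X) = Suc (card X)" using finite_indep[OF Suc.prems(1)] by simp
    then have "card (insert e X) \<le> card Y" "card Y - card (insert e X) = n"
      using Suc.prems by simp_all
    then obtain W where "W \<in> Ind" "insert e X \<subseteq> W" "W \<subseteq> insert e X \<union> Y" "card W = card Y"
      using Suc.IH[OF e(2)] by blast
    then show ?case using e by blast
  qed
  then show ?thesis using assms that by blast
qed

lemma card_indep_le_card_base:
  assumes "B \<in> bases Ind" "X \<in> Ind"
  shows "card X \<le> card B"
proof (rule ccontr)
  assume "\<not> card X \<le> card B"
  moreover have "B \<in> Ind" using assms(1) unfolding bases_def by blast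
  ultimately obtain e where "e \<in> X - B" "insert e B \<in> Ind"
    using indep_augment[OF _ assms(2)] by (meson not_le)
  then show False using assms(1) unfolding bases_def by blast
qed

lemma max_card_indep_is_base:
  assumes "B \<in> Ind" "\<And>X. X \<in> Ind \<Longrightarrow> card X \<le> card B"
  shows "B \<in> bases Ind"
  unfolding bases_def using assms finite_indep card_seteq by blast

lemma bases_nonempty: "\<exists>B. B \<in> bases Ind"
proof -
  have "card X < Suc (card E)" if "X \<in> Ind" for X
    using card_mono[OF finite_ground indep_subset_ground[OF that]] by simp
  then obtain B where "B \<in> Ind" "\<forall>X. X \<in> Ind \<longrightarrow> card X \<le> card B"
    using ex_has_greatest_nat[of "\<lambda>X. X \<in> Ind", OF empty_indep] by blast
  then show ?thesis using max_card_indep_is_base by blast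
qed

lemma card_base:
  assumes "B \<in> bases Ind"
  shows "card B = mrank Ind"
proof -
  let ?B0 = "SOME B. B \<in> bases Ind"
  have B0: "?B0 \<in> bases Ind" using bases_nonempty by (rule someI_ex)
  then have "?B0 \<in> Ind" "B \<in> Ind" using assms unfolding bases_def by auto
  then show ?thesis
    unfolding mrank_def
    using card_indep_le_card_base[OF assms] card_indep_le_card_base[OF B0] le_antisym by metis
qed

lemma card_indep_le_mrank: "X \<in> Ind \<Longrightarrow> card X \<le> mrank Ind"
  using bases_nonempty card_base card_indep_le_card_base by fastforce

lemma bases_iff: "B \<in> bases Ind \<longleftrightarrow> B \<in> Ind \<and> card B = mrank Ind"
proof
  assume "B \<in> bases Ind"
  then show "B \<in> Ind \<and> card B = mrank Ind" using card_base unfolding bases_def by blast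
next
  assume "B \<in> Ind \<and> card B = mrank Ind"
  then show "B \<in> bases Ind" using max_card_indep_is_base card_indep_le_mrank by simp
qed

lemma indep_extend_to_base:
  assumes "X \<in> Ind"
  obtains B where "B \<in> bases Ind" "X \<subseteq> B"
proof -
  obtain B0 where B0: "B0 \<in> bases Ind" using bases_nonempty ..
  then have "B0 \<in> Ind" "card X \<le> card B0"
    using card_indep_le_card_base[OF B0 assms] unfolding bases_def by auto
  then obtain B where "B \<in> Ind" "X \<subseteq> B" "card B = card B0"
    using indep_extend[OF assms] by blast
  then show ?thesis using that bases_iff card_base[OF B0] by metis
qed

definition circuit :: "'a set \<Rightarrow> bool" where
  "circuit C \<longleftrightarrow> C \<subseteq> E \<and> C \<notin> Ind \<and> (\<forall>c\<in>C. C - {c} \<in> Ind)"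

lemma dependent_contains_circuit:
  assumes "X \<subseteq> E" "X \<notin> Ind"
  obtains C where "C \<subseteq> X" "circuit C"
proof -
  have "\<exists>C\<subseteq>X. circuit C" if "X \<subseteq> E" "X \<notin> Ind" for X
    using that
  proof (induction "card X" arbitrary: X rule: less_induct)
    case less
    show ?case
    proof (cases "\<forall>c\<in>X. X - {c} \<in> Ind")
      case True
      then show ?thesis using less.prems unfolding circuit_def by blast
    next
      case False
      then obtain c where "c \<in> X" "X - {c} \<notin> Ind" by blast
      moreover have "finite X" using less.prems(1) finite_ground finite_subset by blast
      ultimately show ?thesis
        using less.hyps[of "X - {c}"] less.prems(1) by (meson card_Diff1_less Diff_subset order_trans)
    qed
  qed
  then show ?thesis using assms that by blast
qed

lemma circuit_not_subset_indep:
  assumes "circuit C" "X \<in> Ind"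
  shows "\<not> C \<subseteq> X"
  using assms indep_subset[OF assms(2), of C] unfolding circuit_def by blast

lemma circuit_exchange_base:
  assumes B: "B \<in> bases Ind" and C: "circuit C" "C \<subseteq> insert a B"
    and x: "x \<in> C" "x \<noteq> a"
  shows "insert a (B - {x}) \<in> bases Ind"
proof -
  have BI: "B \<in> Ind" using B unfolding bases_def by blast
  have fB: "finite B" using finite_indep[OF BI] .
  have "\<not> C \<subseteq> B" using circuit_not_subset_indep[OF C(1) BI] .
  then have aB: "a \<notin> B" using C(2) by blast
  have xB: "x \<in> B" using x C(2) by blast
  have card_exchange: "card (insert a (B - {x})) = card B"
    using aB xB fB card_Suc_Diff1[OF fB xB] by simp
  have Cx: "C - {x} \<in> Ind" using C(1) x(1) unfolding circuit_def by blast
  obtain W where W: "W \<in> Ind" "C - {x} \<subseteq> W" "W \<subseteq> (C - {x}) \<union> B" "card W = card B"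
    using indep_extend[OF Cx BI card_indep_le_card_base[OF B Cx]] by blast
  have "x \<notin> W" using circuit_not_subset_indep[OF C(1) W(1)] W(2) by blast
  then have "W \<subseteq> insert a (B - {x})" using W(3) C(2) by blast
  then have "W = insert a (B - {x})"
    using card_seteq[of "insert a (B - {x})" W] card_exchange W(4) fB by simp
  then show ?thesis using W(1,4) bases_iff card_base[OF B] by simp
qed

lemma unique_expansion_circuit_card_le_2:
  assumes ue: "unique_expansion Ind" and C: "circuit C"
  shows "card C \<le> 2"
proof (rule ccontr)
  assume "\<not> card C \<le> 2"
  then obtain T where "T \<subseteq> C" "card T = 3"
    using obtain_subset_with_card_n[of 3 C] by auto
  then obtain a b c where abc: "a \<in> C" "b \<in> C" "c \<in> C" "a \<noteq> b" "a \<noteq> c" "b \<noteq> c"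
    unfolding card_3_iff by blast
  have "C - {a} \<in> Ind" using C abc(1) unfolding circuit_def by blast
  then obtain B where B: "B \<in> bases Ind" "C - {a} \<subseteq> B" using indep_extend_to_base by blast
  have BI: "B \<in> Ind" and fB: "finite B" using B(1) finite_indep unfolding bases_def by auto
  have CB: "C \<subseteq> insert a B" using B(2) by blast
  have aB: "a \<notin> B" using circuit_not_subset_indep[OF C BI] CB by blast
  have bB: "b \<in> B" and cB: "c \<in> B" using B(2) abc by blast+
  have Bb: "insert a (B - {b}) \<in> bases Ind"
    using circuit_exchange_base[OF B(1) C CB abc(2)] abc(4) by blast
  have Bc: "insert a (B - {c}) \<in> bases Ind"
    using circuit_exchange_base[OF B(1) C CB abc(3)] abc(5) by blast
  define A where "A = insert a (B - {b, c})"
  have "A \<subseteq> insert a (B - {b})" unfolding A_def by blast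
  then have "A \<in> Ind" using Bb indep_subset unfolding bases_iff by blast
  moreover have "card A = mrank Ind - 1"
  proof -
    have "card (B - {b, c}) = card B - 2"
      using bB cB abc(6) fB by (simp add: card_Diff_subset)
    moreover have "card {b, c} \<le> card B" using bB cB fB by (simp add: card_mono)
    ultimately show ?thesis
      unfolding A_def using aB fB abc(6) card_base[OF B(1)] by simp
  qed
  ultimately have As: "A \<in> sfam Ind" unfolding sfam_def by blast
  have "insert c A = insert a (B - {b})" using cB abc(6) unfolding A_def by auto
  moreover have "insert b A = insert a (B - {c})" using bB abc(6) unfolding A_def by auto
  ultimately have "b = c"
    using ue[unfolded unique_expansion_def, rule_format, OF B(1) As bB cB] Bb Bc by simp
  with abc(6) show False by contradiction
qed

definition nonloops :: "'a set" where
  "nonloops = {e. {e} \<in> Ind}"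

definition parallel :: "'a rel" where
  "parallel = {(e, f). e \<in> nonloops \<and> f \<in> nonloops \<and> (e = f \<or> {e, f} \<notin> Ind)}"

lemma nonloops_subset_ground: "nonloops \<subseteq> E"
  unfolding nonloops_def using indep_subset_ground by blast

lemma equiv_parallel: "equiv nonloops parallel"
proof (rule equivI)
  show "trans parallel"
  proof (rule transI)
    fix e f g assume ef: "(e, f) \<in> parallel" and fg: "(f, g) \<in> parallel"
    show "(e, g) \<in> parallel"
    proof (rule ccontr)
      assume "(e, g) \<notin> parallel"
      then have eg: "e \<noteq> g" "{e, g} \<in> Ind" using ef fg unfolding parallel_def by auto
      moreover have "{f} \<in> Ind" using fg unfolding parallel_def nonloops_def by blast
      ultimately obtain x where "x \<in> {e, g} - {f}" "{x, f} \<in> Ind"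
        using indep_augment[of "{f}" "{e, g}"] by auto
      then show False using ef fg unfolding parallel_def by (auto simp: insert_commute)
    qed
  qed
next
  show "parallel \<subseteq> nonloops \<times> nonloops" unfolding parallel_def by blast
next
  show "refl_on nonloops parallel" unfolding refl_on_def parallel_def by blast
next
  show "sym parallel" unfolding sym_def parallel_def by (auto simp: insert_commute)
qed

lemma indep_imp_partition_indep_parallel_classes:
  assumes X: "X \<in> Ind"
  shows "X \<in> partition_indep (nonloops // parallel)"
proof -
  have "{x} \<in> Ind" if "x \<in> X" for x using indep_subset[OF X] that by simp
  then have "X \<subseteq> nonloops" unfolding nonloops_def by blast
  moreover have "x = y" if D: "D \<in> nonloops // parallel" and xy: "x \<in> X \<inter> D" "y \<in> X \<inter> D" for D x y
  proof -
    have "(x, y) \<in> parallel" using quotient_eq_iff[OF equiv_parallel D D] xy by blast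
    moreover have "{x, y} \<in> Ind" using indep_subset[OF X, of "{x, y}"] xy by simp
    ultimately show ?thesis unfolding parallel_def by blast
  qed
  ultimately show ?thesis
    using finite_indep[OF X] Union_quotient[OF equiv_parallel] by (simp add: partition_indep_iff)
qed

lemma partition_indep_parallel_classes_imp_indep:
  assumes ue: "unique_expansion Ind" and X: "X \<in> partition_indep (nonloops // parallel)"
  shows "X \<in> Ind"
proof (rule ccontr)
  assume "X \<notin> Ind"
  have XN: "X \<subseteq> nonloops"
    using X unfolding partition_indep_def Union_quotient[OF equiv_parallel] by simp
  then have fX: "finite X" using nonloops_subset_ground finite_ground by (meson finite_subset)
  obtain C where CX: "C \<subseteq> X" and C: "circuit C"
    using dependent_contains_circuit[OF order_trans[OF XN nonloops_subset_ground] \<open>X \<notin> Ind\<close>] .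
  have CN: "C \<subseteq> nonloops" using CX XN by (rule order_trans)
  have "C \<noteq> {}" using C empty_indep unfolding circuit_def by auto
  then have "card C \<noteq> 0" using finite_subset[OF CX fX] by simp
  then consider "card C = 1" | "card C = 2"
    using unique_expansion_circuit_card_le_2[OF ue C] by linarith
  then show False
  proof cases
    case 1
    then obtain x where "C = {x}" by (rule card_1_singletonE)
    then show False using C CN unfolding circuit_def nonloops_def by simp
  next
    case 2
    then obtain x y where xy: "C = {x, y}" "x \<noteq> y" unfolding card_2_iff by blast
    have x: "x \<in> nonloops" using CN xy(1) by simp
    have "(x, y) \<in> parallel" using C CN xy unfolding circuit_def parallel_def by simp
    then have "x \<in> X \<inter> parallel `` {x}" "y \<in> X \<inter> parallel `` {x}"
      using equiv_class_self[OF equiv_parallel x] CX xy(1) by auto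
    then show False
      using X[unfolded partition_indep_iff[OF fX]] quotientI[OF x] xy(2) by blast
  qed
qed

lemma unique_expansion_imp_unique_partition:
  assumes ue: "unique_expansion Ind"
  shows "unique_partition E Ind"
proof -
  have "Ind = partition_indep (nonloops // parallel)"
    using indep_imp_partition_indep_parallel_classes
      partition_indep_parallel_classes_imp_indep[OF ue] by blast
  then show ?thesis
    unfolding unique_partition_def
    using equiv_is_partition_quotient[OF equiv_parallel] nonloops_subset_ground
    by (intro exI[of _ "nonloops // parallel"])
      (simp add: Union_quotient[OF equiv_parallel] partition_indep_def)
qed

lemma insert_base_sfam_notin:
  assumes "A \<in> sfam Ind" "insert e A \<in> bases Ind"
  shows "e \<notin> A"
proof
  assume "e \<in> A"
  then have "card A = mrank Ind" using assms(2) card_base by (simp add: insert_absorb)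
  moreover have "card A \<noteq> 0"
    using \<open>e \<in> A\<close> assms(1) finite_indep unfolding sfam_def by auto
  moreover have "card A = mrank Ind - 1" using assms(1) unfolding sfam_def by blast
  ultimately show False by linarith
qed

lemma partition_indep_imp_unique_expansion:
  assumes P: "is_partition P U" and IndP: "Ind = partition_indep P"
  shows "unique_expansion Ind"
  unfolding unique_expansion_def
proof (intro ballI impI)
  fix B A e1 e2
  assume B: "B \<in> bases Ind" and A: "A \<in> sfam Ind" and e: "e1 \<in> B" "e2 \<in> B"
    and ins: "insert e1 A \<in> bases Ind \<and> insert e2 A \<in> bases Ind"
  have fA: "finite A" using A finite_indep unfolding sfam_def by blast
  have I1: "insert e1 A \<in> Ind" "card (insert e1 A) = mrank Ind"
    and I2: "insert e2 A \<in> Ind"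
    using ins bases_iff by auto
  obtain D1 where D1: "D1 \<in> P" "e1 \<in> D1" "A \<inter> D1 = {}"
    using partition_indep_insert_block[of e1 A P] I1(1) IndP fA
      insert_base_sfam_notin[OF A conjunct1[OF ins]] by blast
  have e2A: "e2 \<notin> A" using insert_base_sfam_notin[OF A conjunct2[OF ins]] .
  obtain D2 where D2: "D2 \<in> P" "e2 \<in> D2" "A \<inter> D2 = {}"
    using partition_indep_insert_block[of e2 A P] I2 IndP fA e2A by blast
  have "e2 \<in> D1"
  proof (rule ccontr)
    assume e2D1: "e2 \<notin> D1"
    then have "D1 \<inter> D2 = {}" using P D1(1) D2 unfolding is_partition_def by blast
    then have "insert e1 A \<inter> D2 = {}" using D1(2) D2(3) by blast
    then have "insert e2 (insert e1 A) \<in> Ind"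
      using partition_indep_insert[OF P _ _ D2(1,2)] I1(1) fA IndP by simp
    moreover have "e2 \<notin> insert e1 A" using e2A e2D1 D1(2) by blast
    then have "card (insert e2 (insert e1 A)) = Suc (mrank Ind)"
      using I1(2) fA by simp
    ultimately show False using card_indep_le_mrank by fastforce
  qed
  have "B \<in> Ind" "finite B" using B finite_indep unfolding bases_iff by auto
  then have "\<forall>x\<in>B \<inter> D1. \<forall>y\<in>B \<inter> D1. x = y"
    using D1(1) by (simp add: IndP partition_indep_iff)
  then show "e1 = e2" using e D1(2) \<open>e2 \<in> D1\<close> by blast
qed

end

theorem theorem7:
  fixes E :: "'a set" and Ind :: "'a set set"
  assumes "matroid E Ind" and "mrank Ind > 0"
  shows "unique_expansion Ind \<longleftrightarrow> unique_partition E Ind"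
proof -
  interpret matroid_on E Ind by (rule matroid_on.intro) (rule assms(1))
  show ?thesis
  proof
    assume "unique_expansion Ind"
    then show "unique_partition E Ind" by (rule unique_expansion_imp_unique_partition)
  next
    assume "unique_partition E Ind"
    then obtain P where "is_partition P (\<Union>P)" "Ind = partition_indep P"
      unfolding unique_partition_def partition_indep_def by blast
    then show "unique_expansion Ind" by (rule partition_indep_imp_unique_expansion)
  qed
qed

end
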